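(* Let $\sigma$ be a 2-structure and $X\subsetneq V(\sigma)$ with $\sigma[X]$ prime; write $\overline{X}=V(\sigma)\setminus X$. Suppose Statement (S1) holds, i.e. there is no $v\in\overline{X}$ with $\sigma[X\cup\{v\}]$ prime. Let $M\subseteq\overline{X}$. If $M$ is a module of $\sigma$, then $M$ is a module of the outside graph $\Gamma_{(\sigma,\overline{X})}$, and there exist $B_p\in p_{(\sigma,\overline{X})}$ and $B_q\in q_{(\sigma,\overline{X})}$ such that $M\subseteq B_q\subseteq B_p$ and $M$ is a module of $\sigma[B_p]$.
   Context: A 2-structure $\sigma$ consists of a vertex set $V(\sigma)$ and an equivalence relation $\equiv_\sigma$ on ordered pairs of distinct vertices; $E(\sigma)$ is its set of classes; $\sigma[W]$ is the induced 2-structure on $W$. A module is a set $M$ such that for all $x,y\in M$ and $v\notin M$, $(x,v)\equiv_\sigma(y,v)$ and $(v,x)\equiv_\sigma(v,y)$; $\sigma$ is prime if $|V(\sigma)|\geq3$ and its only modules are $\emptyset$, $V(\sigma)$ and singletons. A graph is viewed as a 2-structure where $(u,v)\equiv(x,y)$ iff both pairs are edges or both non-edges (so a module of a graph is a vertex set $M$ such that each outside vertex is adjacent to all or none of $M$). Given $\sigma[X]$ prime: ${\rm Ext}_\sigma(X)=\{v\in\overline{X}:\sigma[X\cup\{v\}]\text{ prime}\}$; $\langle X\rangle_\sigma=\{v\in\overline{X}: X\text{ is a module of }\sigma[X\cup\{v\}]\}$; for $\alpha\in X$, $X_\sigma(\alpha)=\{v\in\overline{X}:\{\alpha,v\}\text{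 is a module of }\sigma[X\cup\{v\}]\}$. $p_{(\sigma,\overline{X})}$ is the partition of $\overline{X}$ formed by the nonempty sets among ${\rm Ext}_\sigma(X)$, $\langle X\rangle_\sigma$, $X_\sigma(\alpha)$ ($\alpha\in X$). For $e,f\in E(\sigma)$: $\langle X\rangle^{(e,f)}_\sigma=\{v\in\langle X\rangle_\sigma:(v,\alpha)\in e,(\alpha,v)\in f\}$ for any $\alpha\in X$; $X^{(e,f)}_\sigma(\alpha)=\{v\in X_\sigma(\alpha):(v,\alpha)\in e,(\alpha,v)\in f\}$. $q_{(\sigma,\overline{X})}$ is the partition of $\overline{X}$ formed by the nonempty sets among ${\rm Ext}_\sigma(X)$, $\langle X\rangle^{(e,f)}_\sigma$, $X^{(e,f)}_\sigma(\alpha)$ ($e,f\in E(\sigma)$, $\alpha\in X$). The outside graph $\Gamma_{(\sigma,\overline{X})}$ has vertex set $\overline{X}$ and edges the 2-element sets $Y\subseteq\overline{X}$ with $\sigma[X\cup Y]$ prime. *)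

theory Defs
  imports Main
begin

definition offdiag :: "'a set \<Rightarrow> ('a \<times> 'a) set" where
  "offdiag V = {(x, y). x \<in> V \<and> y \<in> V \<and> x \<noteq> y}"

definition two_structure :: "'a set \<Rightarrow> (('a \<times> 'a) \<times> ('a \<times> 'a)) set \<Rightarrow> bool" where
  "two_structure V R \<longleftrightarrow> equiv (offdiag V) R"

definition classes :: "'a set \<Rightarrow> (('a \<times> 'a) \<times> ('a \<times> 'a)) set \<Rightarrow> ('a \<times> 'a) set set" where
  "classes V R = offdiag V // R"

definition induced :: "(('a \<times> 'a) \<times> ('a \<times> 'a)) set \<Rightarrow> 'a set \<Rightarrow> (('a \<times> 'a) \<times> ('a \<times> 'a)) set" where
  "induced R W = R \<inter> (offdiag W \<times> offdiag W)"

definition is_module :: "'a set \<Rightarrow> (('a \<times> 'a) \<times> ('a \<times> 'a)) set \<Rightarrow> 'a set \<Rightarrow> bool" where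
  "is_module V R M \<longleftrightarrow> M \<subseteq> V \<and>
     (\<forall>x\<in>M. \<forall>y\<in>M. \<forall>v\<in>V - M. ((x, v), (y, v)) \<in> R \<and> ((v, x), (v, y)) \<in> R)"

definition is_prime :: "'a set \<Rightarrow> (('a \<times> 'a) \<times> ('a \<times> 'a)) set \<Rightarrow> bool" where
  "is_prime V R \<longleftrightarrow> (\<exists>a\<in>V. \<exists>b\<in>V. \<exists>c\<in>V. a \<noteq> b \<and> a \<noteq> c \<and> b \<noteq> c) \<and>
     (\<forall>M. is_module V R M \<longrightarrow> M = {} \<or> M = V \<or> (\<exists>x. M = {x}))"

definition prime_sub :: "'a set \<Rightarrow> (('a \<times> 'a) \<times> ('a \<times> 'a)) set \<Rightarrow> 'a set \<Rightarrow> bool" where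
  "prime_sub V R W \<longleftrightarrow> W \<subseteq> V \<and> is_prime W (induced R W)"

definition Ext :: "'a set \<Rightarrow> (('a \<times> 'a) \<times> ('a \<times> 'a)) set \<Rightarrow> 'a set \<Rightarrow> 'a set" where
  "Ext V R X = {v \<in> V - X. prime_sub V R (X \<union> {v})}"

definition Enc :: "'a set \<Rightarrow> (('a \<times> 'a) \<times> ('a \<times> 'a)) set \<Rightarrow> 'a set \<Rightarrow> 'a set" where
  "Enc V R X = {v \<in> V - X. is_module (X \<union> {v}) (induced R (X \<union> {v})) X}"

definition Xalpha :: "'a set \<Rightarrow> (('a \<times> 'a) \<times> ('a \<times> 'a)) set \<Rightarrow> 'a set \<Rightarrow> 'a \<Rightarrow> 'a set" where
  "Xalpha V R X \<alpha> = {v \<in> V - X. is_module (X \<union> {v}) (induced R (X \<union> {v})) {\<alpha>, v}}"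

text \<open>For v in Enc, the pair classes do not depend on the choice of alpha in X;
  we require the condition for every alpha in X (X is nonempty when prime).\<close>
definition Enc_ef :: "'a set \<Rightarrow> (('a \<times> 'a) \<times> ('a \<times> 'a)) set \<Rightarrow> 'a set
    \<Rightarrow> ('a \<times> 'a) set \<Rightarrow> ('a \<times> 'a) set \<Rightarrow> 'a set" where
  "Enc_ef V R X e f = {v \<in> Enc V R X. \<forall>\<alpha>\<in>X. (v, \<alpha>) \<in> e \<and> (\<alpha>, v) \<in> f}"

definition Xalpha_ef :: "'a set \<Rightarrow> (('a \<times> 'a) \<times> ('a \<times> 'a)) set \<Rightarrow> 'a set \<Rightarrow> 'a
    \<Rightarrow> ('a \<times> 'a) set \<Rightarrow> ('a \<times> 'a) set \<Rightarrow> 'a set" where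
  "Xalpha_ef V R X \<alpha> e f = {v \<in> Xalpha V R X \<alpha>. (v, \<alpha>) \<in> e \<and> (\<alpha>, v) \<in> f}"

definition part_p :: "'a set \<Rightarrow> (('a \<times> 'a) \<times> ('a \<times> 'a)) set \<Rightarrow> 'a set \<Rightarrow> 'a set set" where
  "part_p V R X = {B. B \<noteq> {} \<and>
     (B = Ext V R X \<or> B = Enc V R X \<or> (\<exists>\<alpha>\<in>X. B = Xalpha V R X \<alpha>))}"

definition part_q :: "'a set \<Rightarrow> (('a \<times> 'a) \<times> ('a \<times> 'a)) set \<Rightarrow> 'a set \<Rightarrow> 'a set set" where
  "part_q V R X = {B. B \<noteq> {} \<and>
     (B = Ext V R X \<or>
      (\<exists>e\<in>classes V R. \<exists>f\<in>classes V R. B = Enc_ef V R X e f) \<or>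
      (\<exists>e\<in>classes V R. \<exists>f\<in>classes V R. \<exists>\<alpha>\<in>X. B = Xalpha_ef V R X \<alpha> e f))}"

definition out_adj :: "'a set \<Rightarrow> (('a \<times> 'a) \<times> ('a \<times> 'a)) set \<Rightarrow> 'a set \<Rightarrow> 'a \<Rightarrow> 'a \<Rightarrow> bool" where
  "out_adj V R X u w \<longleftrightarrow> u \<in> V - X \<and> w \<in> V - X \<and> u \<noteq> w \<and> prime_sub V R (X \<union> {u, w})"

definition graph_module :: "'a set \<Rightarrow> ('a \<Rightarrow> 'a \<Rightarrow> bool) \<Rightarrow> 'a set \<Rightarrow> bool" where
  "graph_module S adj M \<longleftrightarrow> M \<subseteq> S \<and>
     (\<forall>u\<in>S - M. (\<forall>x\<in>M. adj u x) \<or> (\<forall>x\<in>M. \<not> adj u x))"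

end

theory Submission
  imports Defs
begin

text \<open>If x and y lie in a module M of \<sigma>, then every vertex z outside M sees them alike:
  (x, z) \<equiv> (y, z) and (z, x) \<equiv> (z, y). Hence replacing x by y maps \<sigma>[W] onto
  \<sigma>[W - {x} \<union> {y}] keeping every pair in its class, for any W meeting M only in x, and so it
  transports primality and modules. With W = X \<union> {u, x} this shows that a vertex u outside M
  is adjacent in the outside graph to all of M or to none of it. With W = X \<union> {v} it shows that
  every block of q is closed under exchanging v for a vertex that X cannot tell apart from v,
  which all vertices of M are to each other. As every vertex outside X lies in a block of q
  contained in a block of p, M lies in such a block Bq \<subseteq> Bp, and M restricts to a module
  of \<sigma>[Bp].\<close>

lemma two_structure_sym: "two_structure V R \<Longrightarrow> sym R"
  unfolding two_structure_def equiv_def by blast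

lemma two_structure_trans: "two_structure V R \<Longrightarrow> trans R"
  unfolding two_structure_def equiv_def by blast

lemma two_structure_refl: "two_structure V R \<Longrightarrow> p \<in> offdiag V \<Longrightarrow> (p, p) \<in> R"
  unfolding two_structure_def equiv_def by (blast dest: refl_onD)

lemma induced_induced: "W0 \<subseteq> W \<Longrightarrow> induced (induced R W) W0 = induced R W0"
  unfolding induced_def offdiag_def by blast

lemma is_module_induced:
  assumes "is_module W R N" "W0 \<subseteq> W"
  shows "is_module W0 (induced R W0) (N \<inter> W0)"
  using assms unfolding is_module_def induced_def offdiag_def by auto

definition class_preserving_on :: "(('a \<times> 'a) \<times> ('a \<times> 'a)) set \<Rightarrow> 'a set \<Rightarrow> ('a \<Rightarrow> 'a) \<Rightarrow> bool" where
  "class_preserving_on R W f \<longleftrightarrow>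
     inj_on f W \<and> (\<forall>p\<in>W. \<forall>q\<in>W. p \<noteq> q \<longrightarrow> ((p, q), (f p, f q)) \<in> R)"

lemma is_module_image_class_preserving:
  assumes "sym R" "trans R" "class_preserving_on R W f" "is_module W (induced R W) N"
  shows "is_module (f ` W) (induced R (f ` W)) (f ` N)"
  unfolding is_module_def
proof (intro conjI ballI)
  have inj: "inj_on f W"
    and pres: "\<And>p q. p \<in> W \<Longrightarrow> q \<in> W \<Longrightarrow> p \<noteq> q \<Longrightarrow> ((f p, f q), (p, q)) \<in> R"
    using assms(1,3) unfolding class_preserving_on_def by (auto intro: symD)
  have NW: "N \<subseteq> W" using assms(4) unfolding is_module_def by blast
  then show "f ` N \<subseteq> f ` W" by blast
  fix a' b' c' assume "a' \<in> f ` N" "b' \<in> f ` N" "c' \<in> f ` W - f ` N"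
  then obtain a b c where abc: "a \<in> N" "b \<in> N" "c \<in> W - N" "a' = f a" "b' = f b" "c' = f c"
    by blast
  then have ne: "a \<noteq> c" "b \<noteq> c" "f a \<noteq> f c" "f b \<noteq> f c"
    using \<open>c' \<in> f ` W - f ` N\<close> by (auto simp: image_iff)
  have "((a, c), (b, c)) \<in> R" "((c, a), (c, b)) \<in> R"
    using assms(4) abc unfolding is_module_def induced_def by auto
  then have "((f a, f c), (f b, f c)) \<in> R" "((f c, f a), (f c, f b)) \<in> R"
    using pres[of a c] pres[of b c] pres[of c a] pres[of c b] abc ne NW assms(1,2)
    by (blast intro: transD symD)+
  moreover have "a' \<in> f ` W" "b' \<in> f ` W" "c' \<in> f ` W" using abc NW by auto
  ultimately show "((a', c'), (b', c')) \<in> induced R (f ` W)"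
    and "((c', a'), (c', b')) \<in> induced R (f ` W)"
    using abc ne unfolding induced_def offdiag_def by auto
qed

lemma class_preserving_on_the_inv_into:
  assumes "sym R" "class_preserving_on R W f"
  shows "class_preserving_on R (f ` W) (the_inv_into W f)"
proof -
  have inj: "inj_on f W" using assms(2) unfolding class_preserving_on_def by blast
  have "((f p, f q), (p, q)) \<in> R" if "p \<in> W" "q \<in> W" "p \<noteq> q" for p q
    using assms that unfolding class_preserving_on_def by (meson symD)
  then show ?thesis
    using inj inj_on_the_inv_into[OF inj]
    unfolding class_preserving_on_def by (auto simp: the_inv_into_f_f)
qed

lemma is_prime_image_class_preserving:
  assumes "sym R" "trans R" "class_preserving_on R W f" "is_prime W (induced R W)"
  shows "is_prime (f ` W) (induced R (f ` W))"
  unfolding is_prime_def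
proof (intro conjI allI impI)
  have inj: "inj_on f W" using assms(3) unfolding class_preserving_on_def by blast
  obtain a b c where "a \<in> W" "b \<in> W" "c \<in> W" "a \<noteq> b" "a \<noteq> c" "b \<noteq> c"
    using assms(4) unfolding is_prime_def by blast
  with inj show "\<exists>a\<in>f ` W. \<exists>b\<in>f ` W. \<exists>c\<in>f ` W. a \<noteq> b \<and> a \<noteq> c \<and> b \<noteq> c"
    by (metis imageI inj_on_contraD)
  fix N assume N: "is_module (f ` W) (induced R (f ` W)) N"
  let ?g = "the_inv_into W f"
  have "is_module W (induced R W) (?g ` N)"
    using is_module_image_class_preserving[OF assms(1,2) class_preserving_on_the_inv_into[OF assms(1,3)] N]
    by (simp add: inj)
  then have "?g ` N = {} \<or> ?g ` N = W \<or> (\<exists>x. ?g ` N = {x})"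
    using assms(4) unfolding is_prime_def by blast
  moreover have "N = f ` ?g ` N"
    using N inj unfolding is_module_def by (force simp: f_the_inv_into_f image_image)
  ultimately show "N = {} \<or> N = f ` W \<or> (\<exists>x. N = {x})" by auto
qed

definition indistinguishable :: "(('a \<times> 'a) \<times> ('a \<times> 'a)) set \<Rightarrow> 'a set \<Rightarrow> 'a \<Rightarrow> 'a \<Rightarrow> bool" where
  "indistinguishable R W x y \<longleftrightarrow> (\<forall>z\<in>W. ((x, z), (y, z)) \<in> R \<and> ((z, x), (z, y)) \<in> R)"

lemma module_indistinguishable:
  "is_module V R M \<Longrightarrow> x \<in> M \<Longrightarrow> y \<in> M \<Longrightarrow> W \<subseteq> V - M \<Longrightarrow> indistinguishable R W x y"
  unfolding is_module_def indistinguishable_def by blast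

lemma class_preserving_on_replace:
  assumes "two_structure V R" "W \<subseteq> V" "y \<in> V" "y \<notin> W - {x}"
    "indistinguishable R (W - {x}) x y"
  shows "class_preserving_on R W (id(x := y))"
  unfolding class_preserving_on_def
proof (intro conjI ballI impI)
  show "inj_on (id(x := y)) W" using assms(4) by (auto simp: inj_on_def)
  fix p q assume pq: "p \<in> W" "q \<in> W" "p \<noteq> q"
  then have "((p, q), (p, q)) \<in> R"
    using two_structure_refl[OF assms(1)] assms(2) unfolding offdiag_def by blast
  then show "((p, q), (id(x := y)) p, (id(x := y)) q) \<in> R"
    using assms(5) pq unfolding indistinguishable_def by auto
qed

context
  fixes V :: "'a set" and R X u w
  assumes two: "two_structure V R" and XV: "X \<subseteq> V"
    and u: "u \<in> V - X" and w: "w \<in> V - X" and uw: "indistinguishable R X u w"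
begin

private lemma class_preserving_on_extension: "class_preserving_on R (X \<union> {u}) (id(u := w))"
  using class_preserving_on_replace[OF two, of "X \<union> {u}" w u] XV u w uw
  by (simp add: insert_Diff_if)

private lemma image_extension: "id(u := w) ` (X \<union> {u}) = X \<union> {w}" "id(u := w) ` X = X"
  using u by auto

lemma Ext_indistinguishable:
  assumes "u \<in> Ext V R X"
  shows "w \<in> Ext V R X"
proof -
  have "is_prime (X \<union> {u}) (induced R (X \<union> {u}))"
    using assms unfolding Ext_def prime_sub_def by blast
  then have "is_prime (X \<union> {w}) (induced R (X \<union> {w}))"
    using is_prime_image_class_preserving[OF two_structure_sym[OF two] two_structure_trans[OF two]
        class_preserving_on_extension] image_extension by metis
  then show ?thesis using XV w unfolding Ext_def prime_sub_def by blast
qed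

private lemmas module_image_extension = is_module_image_class_preserving[OF
    two_structure_sym[OF two] two_structure_trans[OF two] class_preserving_on_extension]

lemma Enc_indistinguishable:
  assumes "u \<in> Enc V R X"
  shows "w \<in> Enc V R X"
proof -
  have "is_module (X \<union> {u}) (induced R (X \<union> {u})) X" using assms unfolding Enc_def by blast
  then have "is_module (X \<union> {w}) (induced R (X \<union> {w})) X"
    using module_image_extension image_extension by metis
  then show ?thesis using w unfolding Enc_def by blast
qed

lemma Xalpha_indistinguishable:
  assumes "\<alpha> \<in> X" "u \<in> Xalpha V R X \<alpha>"
  shows "w \<in> Xalpha V R X \<alpha>"
proof -
  have "is_module (X \<union> {u}) (induced R (X \<union> {u})) {\<alpha>, u}"
    using assms(2) unfolding Xalpha_def by blast
  moreover have "id(u := w) ` {\<alpha>, u} = {\<alpha>, w}" using assms(1) u by auto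
  ultimately have "is_module (X \<union> {w}) (induced R (X \<union> {w})) {\<alpha>, w}"
    using module_image_extension image_extension by metis
  then show ?thesis using w unfolding Xalpha_def by blast
qed

lemma class_indistinguishable:
  assumes "e \<in> classes V R" "\<alpha> \<in> X"
  shows "(u, \<alpha>) \<in> e \<Longrightarrow> (w, \<alpha>) \<in> e" and "(\<alpha>, u) \<in> e \<Longrightarrow> (\<alpha>, w) \<in> e"
proof -
  have closed: "q \<in> e" if "p \<in> e" "(p, q) \<in> R" for p q
    using in_quotient_imp_closed[of "offdiag V" R e p q] two assms(1) that
    unfolding two_structure_def classes_def by blast
  have "((u, \<alpha>), (w, \<alpha>)) \<in> R" "((\<alpha>, u), (\<alpha>, w)) \<in> R"
    using uw assms(2) unfolding indistinguishable_def by blast+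
  then show "(u, \<alpha>) \<in> e \<Longrightarrow> (w, \<alpha>) \<in> e" and "(\<alpha>, u) \<in> e \<Longrightarrow> (\<alpha>, w) \<in> e"
    using closed by blast+
qed

lemma Enc_ef_indistinguishable:
  "e \<in> classes V R \<Longrightarrow> f \<in> classes V R \<Longrightarrow> u \<in> Enc_ef V R X e f \<Longrightarrow> w \<in> Enc_ef V R X e f"
  using Enc_indistinguishable class_indistinguishable unfolding Enc_ef_def by blast

lemma Xalpha_ef_indistinguishable:
  "e \<in> classes V R \<Longrightarrow> f \<in> classes V R \<Longrightarrow> \<alpha> \<in> X \<Longrightarrow> u \<in> Xalpha_ef V R X \<alpha> e f
    \<Longrightarrow> w \<in> Xalpha_ef V R X \<alpha> e f"
  using Xalpha_indistinguishable class_indistinguishable unfolding Xalpha_ef_def by blast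

end

lemma part_p_subset: "B \<in> part_p V R X \<Longrightarrow> B \<subseteq> V - X"
  unfolding part_p_def Ext_def Enc_def Xalpha_def by blast

lemma part_q_subset: "B \<in> part_q V R X \<Longrightarrow> B \<subseteq> V - X"
  unfolding part_q_def Ext_def Enc_ef_def Enc_def Xalpha_ef_def Xalpha_def by blast

lemma part_q_indistinguishable:
  assumes "two_structure V R" "X \<subseteq> V" "B \<in> part_q V R X" "u \<in> B" "w \<in> V - X"
    "indistinguishable R X u w"
  shows "w \<in> B"
proof -
  have u: "u \<in> V - X" using part_q_subset assms(3,4) by blast
  note closed = Ext_indistinguishable[OF assms(1,2) u assms(5,6)]
    Enc_ef_indistinguishable[OF assms(1,2) u assms(5,6)]
    Xalpha_ef_indistinguishable[OF assms(1,2) u assms(5,6)]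
  from assms(3) consider "B = Ext V R X"
    | e f where "e \<in> classes V R" "f \<in> classes V R" "B = Enc_ef V R X e f"
    | e f \<alpha> where "e \<in> classes V R" "f \<in> classes V R" "\<alpha> \<in> X" "B = Xalpha_ef V R X \<alpha> e f"
    unfolding part_q_def by blast
  then show ?thesis using closed assms(4) by cases auto
qed

lemma Enc_or_Xalpha_if_not_Ext:
  assumes "X \<subseteq> V" "is_prime X (induced R X)" "v \<in> V - X" "v \<notin> Ext V R X"
  shows "v \<in> Enc V R X \<or> (\<exists>\<alpha>\<in>X. v \<in> Xalpha V R X \<alpha>)"
proof -
  let ?W = "X \<union> {v}"
  have "\<exists>a\<in>?W. \<exists>b\<in>?W. \<exists>c\<in>?W. a \<noteq> b \<and> a \<noteq> c \<and> b \<noteq> c"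
    using assms(2) unfolding is_prime_def by blast
  moreover have "\<not> is_prime ?W (induced R ?W)"
    using assms(1,3,4) unfolding Ext_def prime_sub_def by blast
  ultimately obtain N where N: "is_module ?W (induced R ?W) N" "N \<noteq> {}" "N \<noteq> ?W" "\<And>x. N \<noteq> {x}"
    unfolding is_prime_def by blast
  have NW: "N \<subseteq> ?W" using N(1) unfolding is_module_def by blast
  have "is_module X (induced R X) (N \<inter> X)"
    using is_module_induced[OF N(1), of X] induced_induced[of X ?W R] by auto
  then consider "N \<inter> X = {}" | "N \<inter> X = X" | x where "N \<inter> X = {x}"
    using assms(2) unfolding is_prime_def by blast
  then show ?thesis
  proof cases
    case 1
    then show ?thesis using NW N(2,4) by blast
  next
    case 2
    then have "N = X" using NW N(3) by blast
    then show ?thesis using N(1) assms(3) unfolding Enc_def by blast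
  next
    case (3 x)
    then have "N = {x, v}" using NW N(4) by blast
    then show ?thesis using N(1) assms(3) 3 unfolding Xalpha_def by blast
  qed
qed

lemma Enc_in_Enc_ef:
  assumes "v \<in> Enc V R X" "\<alpha> \<in> X"
  shows "v \<in> Enc_ef V R X (R `` {(v, \<alpha>)}) (R `` {(\<alpha>, v)})"
  using assms unfolding Enc_ef_def Enc_def is_module_def induced_def by blast

lemma Xalpha_in_Xalpha_ef:
  assumes "two_structure V R" "X \<subseteq> V" "v \<in> Xalpha V R X \<alpha>" "\<alpha> \<in> X"
  shows "v \<in> Xalpha_ef V R X \<alpha> (R `` {(v, \<alpha>)}) (R `` {(\<alpha>, v)})"
proof -
  have "(v, \<alpha>) \<in> offdiag V" "(\<alpha>, v) \<in> offdiag V"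
    using assms(2-4) unfolding Xalpha_def offdiag_def by auto
  then show ?thesis
    using assms(3) two_structure_refl[OF assms(1)] unfolding Xalpha_ef_def by blast
qed

lemma part_q_refines_part_p:
  assumes "two_structure V R" "X \<subseteq> V" "is_prime X (induced R X)" "v \<in> V - X"
  shows "\<exists>Bp\<in>part_p V R X. \<exists>Bq\<in>part_q V R X. v \<in> Bq \<and> Bq \<subseteq> Bp"
proof -
  have classes: "R `` {(v, \<alpha>)} \<in> classes V R" "R `` {(\<alpha>, v)} \<in> classes V R" if "\<alpha> \<in> X" for \<alpha>
    using that assms(2,4) unfolding classes_def offdiag_def by (auto intro: quotientI)
  obtain \<alpha>0 where "\<alpha>0 \<in> X" using assms(3) unfolding is_prime_def by blast
  consider "v \<in> Ext V R X" | "v \<in> Enc V R X" | \<alpha> where "\<alpha> \<in> X" "v \<in> Xalpha V R X \<alpha>"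
    using Enc_or_Xalpha_if_not_Ext[OF assms(2-4)] by blast
  then show ?thesis
  proof cases
    case 1
    then have "Ext V R X \<in> part_p V R X" "Ext V R X \<in> part_q V R X"
      unfolding part_p_def part_q_def by auto
    then show ?thesis using 1 by blast
  next
    case 2
    let ?Bq = "Enc_ef V R X (R `` {(v, \<alpha>0)}) (R `` {(\<alpha>0, v)})"
    have "v \<in> ?Bq" using Enc_in_Enc_ef[OF 2 \<open>\<alpha>0 \<in> X\<close>] .
    then have "?Bq \<in> part_q V R X"
      using classes[OF \<open>\<alpha>0 \<in> X\<close>] unfolding part_q_def by blast
    moreover have "Enc V R X \<in> part_p V R X" using 2 unfolding part_p_def by auto
    moreover have "?Bq \<subseteq> Enc V R X" unfolding Enc_ef_def by blast
    ultimately show ?thesis using \<open>v \<in> ?Bq\<close> by blast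
  next
    case 3
    let ?Bq = "Xalpha_ef V R X \<alpha> (R `` {(v, \<alpha>)}) (R `` {(\<alpha>, v)})"
    have "v \<in> ?Bq" using Xalpha_in_Xalpha_ef[OF assms(1,2) 3(2,1)] .
    then have "?Bq \<in> part_q V R X"
      using classes[OF 3(1)] 3(1) unfolding part_q_def by blast
    moreover have "Xalpha V R X \<alpha> \<in> part_p V R X" using 3 unfolding part_p_def by auto
    moreover have "?Bq \<subseteq> Xalpha V R X \<alpha>" unfolding Xalpha_ef_def by blast
    ultimately show ?thesis using \<open>v \<in> ?Bq\<close> by blast
  qed
qed

lemma module_is_out_graph_module:
  assumes "two_structure V R" "X \<subseteq> V" "M \<subseteq> V - X" "is_module V R M"
  shows "graph_module (V - X) (out_adj V R X) M"
proof -
  have "out_adj V R X u y"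
    if u: "u \<in> V - X - M" and xy: "x \<in> M" "y \<in> M" and ux: "out_adj V R X u x" for u x y
  proof -
    let ?W = "X \<union> {u, x}"
    have "?W - {x} \<subseteq> V - M" using u xy assms(2,3) by auto
    then have "indistinguishable R (?W - {x}) x y"
      using module_indistinguishable[OF assms(4) xy] by blast
    moreover have "?W \<subseteq> V" "y \<in> V" "y \<notin> ?W - {x}" using u xy assms(2,3) by auto
    ultimately have "class_preserving_on R ?W (id(x := y))"
      using class_preserving_on_replace[OF assms(1)] by blast
    moreover have "is_prime ?W (induced R ?W)" using ux unfolding out_adj_def prime_sub_def by blast
    moreover have "id(x := y) ` ?W = X \<union> {u, y}" using u xy assms(3) by auto
    ultimately have "is_prime (X \<union> {u, y}) (induced R (X \<union> {u, y}))"
      using is_prime_image_class_preserving two_structure_sym[OF assms(1)]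
        two_structure_trans[OF assms(1)] by metis
    then show ?thesis using u xy assms(2,3) ux unfolding out_adj_def prime_sub_def by auto
  qed
  then show ?thesis using assms(3) unfolding graph_module_def by blast
qed

theorem lemma2p5:
  fixes V :: "'a set" and R :: "(('a \<times> 'a) \<times> ('a \<times> 'a)) set" and X M :: "'a set"
  assumes "two_structure V R"
    and "X \<subset> V"
    and "is_prime X (induced R X)"
    and S1: "\<not> (\<exists>v\<in>V - X. is_prime (X \<union> {v}) (induced R (X \<union> {v})))"
    and "M \<subseteq> V - X"
    and "is_module V R M"
  shows "graph_module (V - X) (out_adj V R X) M \<and>
         (\<exists>Bp\<in>part_p V R X. \<exists>Bq\<in>part_q V R X.
            M \<subseteq> Bq \<and> Bq \<subseteq> Bp \<and> is_module Bp (induced R Bp) M)"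
proof -
  have XV: "X \<subseteq> V" using assms(2) by blast
  obtain m where m: "m \<in> V - X" and "\<forall>w\<in>M. indistinguishable R X m w"
  proof (cases "M = {}")
    case True
    then show ?thesis using that assms(2) by blast
  next
    case False
    then obtain m where "m \<in> M" by blast
    then show ?thesis
      using that module_indistinguishable[OF assms(6)] assms(5) XV by blast
  qed
  moreover obtain Bp Bq where B: "Bp \<in> part_p V R X" "Bq \<in> part_q V R X" "m \<in> Bq" "Bq \<subseteq> Bp"
    using part_q_refines_part_p[OF assms(1) XV assms(3) m] by blast
  ultimately have "M \<subseteq> Bq" using part_q_indistinguishable[OF assms(1) XV B(2,3)] assms(5) by blast
  moreover have "Bp \<subseteq> V" using part_p_subset[OF B(1)] by blast
  then have "is_module Bp (induced R Bp) M"
    using is_module_induced[OF assms(6), of Bp] \<open>M \<subseteq> Bq\<close> B(4) by (simp add: Int_absorb2)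
  ultimately show ?thesis using B module_is_out_graph_module[OF assms(1) XV assms(5,6)] by blast
qed

end
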